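(* For every Tychonoff space $X$, the following are equivalent: (1) $C_p(X)\models S_1(\Gamma_f,\Omega_f)$ for every $f\in C_p(X)$; (2) $X\models S_1(\Gamma_F,\Omega)$.
   Context: All spaces are Tychonoff; $C_p(X)$ is $C(X)$ with pointwise convergence topology. For $y$ in a space $Y$: $\Omega_y=\{A\subseteq Y: y\in\overline A\setminus A\}$, $\Gamma_y=\{A\subseteq Y: A$ infinite, $y\notin A$, every neighbourhood of $y$ contains all but finitely many points of $A\}$. A zero-set is $g^{-1}(0)$ for some $g\in C(X)$; a cozero-set is the complement of a zero-set. A cover $\mathcal U$ of $X$ always means $X=\bigcup\mathcal U$, $X\notin\mathcal U$. $\Omega$: open $\omega$-covers (every finite subset of $X$ lies in some member). A $\gamma$-cover is an infinite cover such that each point lies in all but finitely many members. $\Gamma_F$ is the family of $\gamma$-covers $\mathcal U$ of $X$ by cozero-sets that are $\gamma_F$-shrinkable: there exist zero-sets $F(U)\subseteq U$ ($U\in\mathcal U$) such that $\{F(U):U\in\mathcal U\}$ is a $\gamma$-cover of $X$. $S_1(\mathcal A,\mathcal B)$: for every sequence $(A_n)$ from $\mathcal A$ there are $b_n\in A_n$ with $\{b_n:n\in\omega\}\in\mathcal B$. *)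

theory Defs
  imports "HOL-Analysis.Analysis"
begin

definition tychonoff_space :: "'a topology \<Rightarrow> bool" where
  "tychonoff_space X \<longleftrightarrow> completely_regular_space X \<and> t1_space X"

text \<open>C_p(X): continuous real functions on X (extensional, i.e. undefined off the
  carrier), with the topology of pointwise convergence (subspace of the product).\<close>
definition Cp :: "'a topology \<Rightarrow> ('a \<Rightarrow> real) topology" where
  "Cp X = subtopology (powertop_real (topspace X))
            {f. continuous_map X euclideanreal f \<and> f \<in> extensional (topspace X)}"

definition Omega_at :: "'b topology \<Rightarrow> 'b \<Rightarrow> 'b set set" where
  "Omega_at Y y = {A. A \<subseteq> topspace Y \<and> y \<in> Y closure_of A \<and> y \<notin> A}"

definition Gamma_at :: "'b topology \<Rightarrow> 'b \<Rightarrow> 'b set set" where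
  "Gamma_at Y y = {A. A \<subseteq> topspace Y \<and> infinite A \<and> y \<notin> A \<and>
      (\<forall>U. openin Y U \<and> y \<in> U \<longrightarrow> finite (A - U))}"

definition S1 :: "'c set set \<Rightarrow> 'c set set \<Rightarrow> bool" where
  "S1 \<A> \<B> \<longleftrightarrow> (\<forall>A :: nat \<Rightarrow> 'c set. (\<forall>n. A n \<in> \<A>) \<longrightarrow>
      (\<exists>b. (\<forall>n. b n \<in> A n) \<and> range b \<in> \<B>))"

definition zero_set :: "'a topology \<Rightarrow> 'a set \<Rightarrow> bool" where
  "zero_set X Z \<longleftrightarrow> (\<exists>g. continuous_map X euclideanreal g \<and> Z = {x \<in> topspace X. g x = 0})"

definition cozero_set :: "'a topology \<Rightarrow> 'a set \<Rightarrow> bool" where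
  "cozero_set X U \<longleftrightarrow> (\<exists>Z. zero_set X Z \<and> U = topspace X - Z)"

definition is_cover :: "'a topology \<Rightarrow> 'a set set \<Rightarrow> bool" where
  "is_cover X \<U> \<longleftrightarrow> \<Union>\<U> = topspace X \<and> topspace X \<notin> \<U>"

definition omega_covers :: "'a topology \<Rightarrow> 'a set set set" where
  "omega_covers X = {\<U>. is_cover X \<U> \<and> (\<forall>U\<in>\<U>. openin X U) \<and>
      (\<forall>F. finite F \<and> F \<subseteq> topspace X \<longrightarrow> (\<exists>U\<in>\<U>. F \<subseteq> U))}"

definition is_gamma_cover :: "'a topology \<Rightarrow> 'a set set \<Rightarrow> bool" where
  "is_gamma_cover X \<U> \<longleftrightarrow> is_cover X \<U> \<and> infinite \<U> \<and>
      (\<forall>x\<in>topspace X. finite {U\<in>\<U>. x \<notin> U})"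

definition GammaF_covers :: "'a topology \<Rightarrow> 'a set set set" where
  "GammaF_covers X = {\<U>. is_gamma_cover X \<U> \<and> (\<forall>U\<in>\<U>. cozero_set X U) \<and>
      (\<exists>F. (\<forall>U\<in>\<U>. zero_set X (F U) \<and> F U \<subseteq> U) \<and> is_gamma_cover X (F ` \<U>))}"

end

theory Submission
  imports Defs
begin

text \<open>
  (1) \<open>\<Longrightarrow>\<close> (2), using only \<open>f = 0\<close>: for a \<open>\<gamma>\<^sub>F\<close>-shrinkable cover \<open>\<U>\<close> with shrinking \<open>F\<close>,
  pick for every member \<open>V\<close> of the \<open>\<gamma>\<close>-cover \<open>F(\<U>)\<close> a continuous function vanishing on \<open>V\<close>
  and equal to \<open>1\<close> off a member \<open>U \<supseteq> V\<close> of \<open>\<U>\<close>. These functions converge pointwise to \<open>0\<close>.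
  If a selection from such sequences accumulates at \<open>0\<close>, then for every finite set \<open>K\<close> one of
  the selected functions is below \<open>1\<close> on \<open>K\<close>, so \<open>K\<close> lies in the corresponding member \<open>U\<^sub>n\<close>:
  the \<open>U\<^sub>n\<close> form an \<open>\<omega>\<close>-cover.

  (2) \<open>\<Longrightarrow>\<close> (1): let the \<open>A\<^sub>n\<close> converge to \<open>f\<close>. If each \<open>A\<^sub>n\<close> has only finitely many members
  at uniform distance at least \<open>1/(n+1)\<close> from \<open>f\<close>, picking one of the others from each \<open>A\<^sub>n\<close>
  gives uniform convergence. Otherwise some \<open>A\<^sub>m\<close> contains infinitely many \<open>c\<^sub>k\<close> with
  \<open>sup |c\<^sub>k - f| \<ge> \<epsilon>\<close>. Enumerating \<open>A\<^sub>n\<close> as \<open>a(n,k)\<close>, the cozero-sets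
  \<open>{|c\<^sub>k - f| < \<epsilon>} \<inter> {|a(n,k) - f| < 1/(n+1)}\<close> form a \<open>\<gamma>\<^sub>F\<close>-shrinkable cover for each \<open>n\<close>,
  the first factor keeping them proper. Every finite set lies in members with arbitrarily large
  \<open>n\<close> of an \<open>\<omega>\<close>-cover selected from these, so the selected \<open>a(n,k\<^sub>n)\<close> accumulate at \<open>f\<close>.
\<close>

section \<open>The topology of pointwise convergence\<close>

definition Cp_nbhd :: "'a topology \<Rightarrow> ('a \<Rightarrow> real) \<Rightarrow> 'a set \<Rightarrow> real \<Rightarrow> ('a \<Rightarrow> real) set" where
  "Cp_nbhd X f K d = {g \<in> topspace (Cp X). \<forall>x\<in>K. \<bar>g x - f x\<bar> < d}"

lemma topspace_Cp:
  "topspace (Cp X) = {f. continuous_map X euclideanreal f \<and> f \<in> extensional (topspace X)}"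
  unfolding Cp_def by (auto simp: PiE_def)

lemma restrict_in_topspace_Cp:
  "continuous_map X euclideanreal g \<Longrightarrow> restrict g (topspace X) \<in> topspace (Cp X)"
  unfolding topspace_Cp by (auto elim: continuous_map_eq)

lemma continuous_map_abs_diff_Cp:
  "g \<in> topspace (Cp X) \<Longrightarrow> f \<in> topspace (Cp X) \<Longrightarrow> continuous_map X euclideanreal (\<lambda>x. \<bar>g x - f x\<bar>)"
  unfolding topspace_Cp by (intro continuous_map_real_abs continuous_map_diff) auto

lemma continuous_map_Cp_eval:
  "x \<in> topspace X \<Longrightarrow> continuous_map (Cp X) euclideanreal (\<lambda>g. g x)"
  unfolding Cp_def by (intro continuous_map_from_subtopology continuous_map_product_projection)

lemma openin_Cp_nbhd:
  assumes "finite K" "K \<subseteq> topspace X"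
  shows "openin (Cp X) (Cp_nbhd X f K d)"
proof -
  have "openin (Cp X) {g \<in> topspace (Cp X). g x \<in> ball (f x) d}" if "x \<in> K" for x
    using that assms by (intro openin_continuous_map_preimage[OF continuous_map_Cp_eval]) auto
  then have "openin (Cp X) ((\<Inter>x\<in>K. {g \<in> topspace (Cp X). g x \<in> ball (f x) d}) \<inter> topspace (Cp X))"
    using assms(1) by blast
  moreover have "(\<Inter>x\<in>K. {g \<in> topspace (Cp X). g x \<in> ball (f x) d}) \<inter> topspace (Cp X) = Cp_nbhd X f K d"
    by (auto simp: Cp_nbhd_def dist_real_def abs_minus_commute)
  ultimately show ?thesis
    by simp
qed

lemma Cp_nbhd_subset_openin:
  assumes "openin (Cp X) W" "f \<in> W"
  obtains K d where "finite K" "K \<subseteq> topspace X" "d > 0" "Cp_nbhd X f K d \<subseteq> W"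
proof -
  obtain T where T: "openin (powertop_real (topspace X)) T" "W = T \<inter> topspace (Cp X)"
    using assms(1) unfolding Cp_def openin_subtopology topspace_Cp[unfolded Cp_def] by blast
  obtain U where U: "f \<in> (\<Pi>\<^sub>E i\<in>topspace X. U i)" "\<forall>i. open (U i)"
    "finite {i. U i \<noteq> UNIV}" "(\<Pi>\<^sub>E i\<in>topspace X. U i) \<subseteq> T"
    using product_topology_open_contains_basis[OF T(1), of f] T(2) assms(2) by auto
  define K where "K = {i \<in> topspace X. U i \<noteq> UNIV}"
  have K: "finite K" "K \<subseteq> topspace X"
    using U(3) unfolding K_def by (auto intro: finite_subset)
  have "\<exists>e>0. ball (f i) e \<subseteq> U i" if "i \<in> K" for i
    using U(1,2) that open_contains_ball[of "U i"] unfolding K_def by (auto simp: PiE_iff)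
  then obtain e where e: "\<And>i. i \<in> K \<Longrightarrow> e i > 0 \<and> ball (f i) (e i) \<subseteq> U i"
    by metis
  define d where "d = Min (insert 1 (e ` K))"
  have d: "d > 0" "\<And>i. i \<in> K \<Longrightarrow> d \<le> e i"
    unfolding d_def using K e by auto
  have "Cp_nbhd X f K d \<subseteq> W"
  proof
    fix g assume g: "g \<in> Cp_nbhd X f K d"
    have "g i \<in> U i" if "i \<in> topspace X" for i
    proof (cases "i \<in> K")
      case True
      with g d(2)[OF True] have "\<bar>g i - f i\<bar> < e i"
        by (force simp: Cp_nbhd_def)
      then have "g i \<in> ball (f i) (e i)"
        by (simp add: dist_real_def abs_minus_commute)
      with e True show ?thesis by blast
    qed (use that K_def in auto)
    with g have "g \<in> (\<Pi>\<^sub>E i\<in>topspace X. U i)"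
      by (auto simp: Cp_nbhd_def topspace_Cp extensional_def)
    with g U(4) T(2) show "g \<in> W"
      by (auto simp: Cp_nbhd_def)
  qed
  with K d(1) show thesis by (rule that)
qed

lemma in_closure_of_Cp:
  assumes "S \<subseteq> topspace (Cp X)"
  shows "f \<in> Cp X closure_of S \<longleftrightarrow> f \<in> topspace (Cp X) \<and>
     (\<forall>K d. finite K \<and> K \<subseteq> topspace X \<and> d > 0 \<longrightarrow> (\<exists>s\<in>S. \<forall>x\<in>K. \<bar>s x - f x\<bar> < d))"
proof -
  have "(\<forall>T. f \<in> T \<and> openin (Cp X) T \<longrightarrow> (\<exists>s. s \<in> S \<and> s \<in> T)) \<longleftrightarrow>
     (\<forall>K d. finite K \<and> K \<subseteq> topspace X \<and> d > 0 \<longrightarrow> (\<exists>s\<in>S. \<forall>x\<in>K. \<bar>s x - f x\<bar> < d))"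
    if f: "f \<in> topspace (Cp X)"
  proof (intro iffI allI impI)
    fix K and d :: real
    assume approx: "\<forall>T. f \<in> T \<and> openin (Cp X) T \<longrightarrow> (\<exists>s. s \<in> S \<and> s \<in> T)"
      and K: "finite K \<and> K \<subseteq> topspace X \<and> d > 0"
    have "f \<in> Cp_nbhd X f K d"
      using f K by (simp add: Cp_nbhd_def)
    moreover have "openin (Cp X) (Cp_nbhd X f K d)"
      using K by (simp add: openin_Cp_nbhd)
    ultimately obtain s where "s \<in> S" "s \<in> Cp_nbhd X f K d"
      using approx by blast
    then show "\<exists>s\<in>S. \<forall>x\<in>K. \<bar>s x - f x\<bar> < d"
      by (auto simp: Cp_nbhd_def)
  next
    fix T
    assume approx: "\<forall>K d. finite K \<and> K \<subseteq> topspace X \<and> d > 0 \<longrightarrow> (\<exists>s\<in>S. \<forall>x\<in>K. \<bar>s x - f x\<bar> < d)"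
      and "f \<in> T \<and> openin (Cp X) T"
    then obtain K d where "finite K" "K \<subseteq> topspace X" "d > 0" and nbhd: "Cp_nbhd X f K d \<subseteq> T"
      by (meson Cp_nbhd_subset_openin)
    with approx obtain s where "s \<in> S" "\<forall>x\<in>K. \<bar>s x - f x\<bar> < d"
      by blast
    with assms nbhd show "\<exists>s. s \<in> S \<and> s \<in> T"
      by (auto simp: Cp_nbhd_def)
  qed
  then show ?thesis
    unfolding in_closure_of by blast
qed

lemma Gamma_at_Cp_finite_far:
  assumes "A \<in> Gamma_at (Cp X) f" "f \<in> topspace (Cp X)" "x \<in> topspace X" "d > 0"
  shows "finite {a \<in> A. d \<le> \<bar>a x - f x\<bar>}"
proof -
  have "openin (Cp X) (Cp_nbhd X f {x} d)"
    using assms(3) by (simp add: openin_Cp_nbhd)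
  moreover have "f \<in> Cp_nbhd X f {x} d"
    using assms(2,4) by (simp add: Cp_nbhd_def)
  ultimately have "finite (A - Cp_nbhd X f {x} d)"
    using assms(1) by (simp add: Gamma_at_def)
  moreover have "{a \<in> A. d \<le> \<bar>a x - f x\<bar>} \<subseteq> A - Cp_nbhd X f {x} d"
    by (auto simp: Cp_nbhd_def)
  ultimately show ?thesis
    by (rule finite_subset[rotated])
qed

lemma Gamma_at_CpI:
  assumes "A \<subseteq> topspace (Cp X)" "infinite A" "f \<notin> A"
    and "\<And>x. x \<in> topspace X \<Longrightarrow> finite {a \<in> A. a x \<noteq> f x}"
  shows "A \<in> Gamma_at (Cp X) f"
  unfolding Gamma_at_def
proof (intro CollectI conjI allI impI assms)
  fix W assume "openin (Cp X) W \<and> f \<in> W"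
  then obtain K d where K: "finite K" "K \<subseteq> topspace X" "d > 0" and nbhd: "Cp_nbhd X f K d \<subseteq> W"
    by (meson Cp_nbhd_subset_openin)
  have "A - W \<subseteq> (\<Union>x\<in>K. {a \<in> A. a x \<noteq> f x})"
  proof
    fix a assume a: "a \<in> A - W"
    with assms(1) nbhd obtain x where "x \<in> K" "\<not> \<bar>a x - f x\<bar> < d"
      by (auto simp: Cp_nbhd_def)
    with a K(3) show "a \<in> (\<Union>x\<in>K. {a \<in> A. a x \<noteq> f x})"
      by (intro UN_I[of x]) auto
  qed
  moreover have "finite (\<Union>x\<in>K. {a \<in> A. a x \<noteq> f x})"
    using K assms(4) by blast
  ultimately show "finite (A - W)"
    by (rule finite_subset)
qed

lemma range_in_Omega_at_CpI:
  assumes "f \<in> topspace (Cp X)" "\<And>n. A n \<in> Gamma_at (Cp X) f" "\<And>n. b n \<in> A n"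
    and "\<And>K d. finite K \<Longrightarrow> K \<subseteq> topspace X \<Longrightarrow> d > 0 \<Longrightarrow> \<exists>n. \<forall>x\<in>K. \<bar>b n x - f x\<bar> < d"
  shows "range b \<in> Omega_at (Cp X) f"
proof -
  have "b n \<in> topspace (Cp X)" "b n \<noteq> f" for n
    using assms(2)[of n] assms(3)[of n] unfolding Gamma_at_def by auto
  then have sub: "range b \<subseteq> topspace (Cp X)" and "f \<notin> range b"
    by auto
  have "\<exists>s\<in>range b. \<forall>x\<in>K. \<bar>s x - f x\<bar> < d" if "finite K" "K \<subseteq> topspace X" "d > 0" for K d
    using assms(4)[OF that] by blast
  then have "f \<in> Cp X closure_of range b"
    unfolding in_closure_of_Cp[OF sub] using assms(1) by blast
  with sub \<open>f \<notin> range b\<close> show ?thesis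
    unfolding Omega_at_def by blast
qed

section \<open>Zero-sets and cozero-sets\<close>

lemma zero_setI:
  "continuous_map X euclideanreal g \<Longrightarrow> zero_set X {x \<in> topspace X. g x = 0}"
  unfolding zero_set_def by blast

lemma cozero_set_iff:
  "cozero_set X U \<longleftrightarrow> (\<exists>g. continuous_map X euclideanreal g \<and> U = {x \<in> topspace X. g x \<noteq> 0})"
  unfolding cozero_set_def zero_set_def by auto

lemma openin_cozero_set:
  assumes "cozero_set X U"
  shows "openin X U"
proof -
  obtain g where g: "continuous_map X euclideanreal g" "U = {x \<in> topspace X. g x \<noteq> 0}"
    using assms unfolding cozero_set_iff by auto
  have "openin X {x \<in> topspace X. g x \<in> - {0}}"
    by (rule openin_continuous_map_preimage[OF g(1)]) auto
  with g(2) show ?thesis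
    by simp
qed

lemma zero_set_le:
  assumes "continuous_map X euclideanreal u"
  shows "zero_set X {x \<in> topspace X. u x \<le> c}"
proof -
  have "{x \<in> topspace X. u x \<le> c} = {x \<in> topspace X. max 0 (u x - c) = 0}"
    by (auto simp: max_def)
  then show ?thesis
    using zero_setI[of X "\<lambda>x. max 0 (u x - c)"] assms by (simp add: continuous_intros)
qed

lemma cozero_set_less:
  assumes "continuous_map X euclideanreal u"
  shows "cozero_set X {x \<in> topspace X. u x < c}"
proof -
  have "{x \<in> topspace X. u x < c} = {x \<in> topspace X. max 0 (c - u x) \<noteq> 0}"
    by (auto simp: max_def)
  then show ?thesis
    unfolding cozero_set_iff using assms by (intro exI[of _ "\<lambda>x. max 0 (c - u x)"]) (simp add: continuous_intros)
qed

lemma zero_set_Int: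
  assumes "zero_set X Z" "zero_set X Z'"
  shows "zero_set X (Z \<inter> Z')"
proof -
  obtain g h where g: "continuous_map X euclideanreal g" "Z = {x \<in> topspace X. g x = 0}"
    and h: "continuous_map X euclideanreal h" "Z' = {x \<in> topspace X. h x = 0}"
    using assms unfolding zero_set_def by auto
  then have "Z \<inter> Z' = {x \<in> topspace X. \<bar>g x\<bar> + \<bar>h x\<bar> = 0}"
    by auto
  then show ?thesis
    using g(1) h(1) by (metis zero_setI continuous_map_add continuous_map_real_abs)
qed

lemma cozero_set_Int:
  assumes "cozero_set X U" "cozero_set X U'"
  shows "cozero_set X (U \<inter> U')"
proof -
  obtain g h where g: "continuous_map X euclideanreal g" "U = {x \<in> topspace X. g x \<noteq> 0}"
    and h: "continuous_map X euclideanreal h" "U' = {x \<in> topspace X. h x \<noteq> 0}"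
    using assms unfolding cozero_set_iff by auto
  then have "U \<inter> U' = {x \<in> topspace X. g x * h x \<noteq> 0}"
    by auto
  then show ?thesis
    unfolding cozero_set_iff using g(1) h(1) by (metis continuous_map_real_mult)
qed

lemma zero_set_cozero_set_separation:
  assumes "zero_set X Z" "cozero_set X U" "Z \<subseteq> U"
  obtains h where "h \<in> topspace (Cp X)" "\<And>x. x \<in> Z \<Longrightarrow> h x = 0"
    "\<And>x. x \<in> topspace X - U \<Longrightarrow> h x = 1"
proof -
  obtain \<alpha> where \<alpha>: "continuous_map X euclideanreal \<alpha>" "Z = {x \<in> topspace X. \<alpha> x = 0}"
    using assms(1) unfolding zero_set_def by blast
  obtain \<beta> where \<beta>: "continuous_map X euclideanreal \<beta>" "U = {x \<in> topspace X. \<beta> x \<noteq> 0}"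
    using assms(2) unfolding cozero_set_iff by blast
  have nonzero: "\<bar>\<alpha> x\<bar> + \<bar>\<beta> x\<bar> \<noteq> 0" if "x \<in> topspace X" for x
    using that assms(3) \<alpha>(2) \<beta>(2) by auto
  define h where "h = restrict (\<lambda>x. \<bar>\<alpha> x\<bar> / (\<bar>\<alpha> x\<bar> + \<bar>\<beta> x\<bar>)) (topspace X)"
  have "h \<in> topspace (Cp X)"
    unfolding h_def
    by (intro restrict_in_topspace_Cp continuous_map_real_divide continuous_intros \<alpha>(1) \<beta>(1) nonzero)
  then show thesis
  proof (rule that)
    show "h x = 0" if "x \<in> Z" for x
      using that \<alpha>(2) by (simp add: h_def)
    show "h x = 1" if "x \<in> topspace X - U" for x
      using that \<beta>(2) nonzero[of x] by (simp add: h_def)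
  qed
qed

section \<open>\<open>\<gamma>\<close>-covers and \<open>\<gamma>\<^sub>F\<close>-shrinkable covers\<close>

lemma infinite_image_if_pointwise_finite:
  assumes "infinite I" "\<And>i. i \<in> I \<Longrightarrow> \<exists>x\<in>T. \<not> R (S i) x"
    and "\<And>x. x \<in> T \<Longrightarrow> finite {i \<in> I. \<not> R (S i) x}"
  shows "infinite (S ` I)"
proof
  assume "finite (S ` I)"
  then obtain i where i: "i \<in> I" "infinite {j \<in> I. S j = S i}"
    using pigeonhole_infinite[OF assms(1)] by blast
  obtain x where x: "x \<in> T" "\<not> R (S i) x"
    using assms(2)[OF i(1)] by blast
  then have "{j \<in> I. S j = S i} \<subseteq> {j \<in> I. \<not> R (S j) x}"
    by auto
  with i(2) assms(3)[OF x(1)] show False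
    using finite_subset by blast
qed

lemma is_gamma_cover_imageI:
  assumes "infinite I" "\<And>i. i \<in> I \<Longrightarrow> S i \<subseteq> topspace X" "\<And>i. i \<in> I \<Longrightarrow> S i \<noteq> topspace X"
    and "\<And>x. x \<in> topspace X \<Longrightarrow> finite {i \<in> I. x \<notin> S i}"
  shows "is_gamma_cover X (S ` I)"
proof -
  have outside: "\<exists>x\<in>topspace X. x \<notin> S i" if "i \<in> I" for i
    using assms(2,3)[OF that] by blast
  have "infinite (S ` I)"
    by (rule infinite_image_if_pointwise_finite[where R = "\<lambda>V x. x \<in> V", OF assms(1) outside assms(4)])
  moreover have "topspace X \<subseteq> \<Union> (S ` I)"
  proof
    fix x assume "x \<in> topspace X"
    with assms(1,4) have "infinite (I - {i \<in> I. x \<notin> S i})"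
      by (rule_tac Diff_infinite_finite) auto
    then obtain i where "i \<in> I - {i \<in> I. x \<notin> S i}"
      using infinite_imp_nonempty by blast
    then show "x \<in> \<Union> (S ` I)"
      by blast
  qed
  moreover have "\<Union> (S ` I) \<subseteq> topspace X"
    using assms(2) by blast
  moreover have "topspace X \<notin> S ` I"
    by (metis assms(3) imageE)
  moreover have "finite {V \<in> S ` I. x \<notin> V}" if "x \<in> topspace X" for x
  proof -
    have "{V \<in> S ` I. x \<notin> V} = S ` {i \<in> I. x \<notin> S i}"
      by auto
    then show ?thesis
      using assms(4)[OF that] by simp
  qed
  ultimately show ?thesis
    unfolding is_gamma_cover_def is_cover_def by blast
qed

text \<open>An indexed \<open>\<gamma>\<^sub>F\<close>-shrinkable cover; the \<open>U k\<close> need not be distinct.\<close>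
definition gammaF_sequence :: "'a topology \<Rightarrow> (nat \<Rightarrow> 'a set) \<Rightarrow> (nat \<Rightarrow> 'a set) \<Rightarrow> bool" where
  "gammaF_sequence X U Z \<longleftrightarrow>
     (\<forall>k. cozero_set X (U k) \<and> zero_set X (Z k) \<and> Z k \<subseteq> U k \<and> U k \<noteq> topspace X) \<and>
     (\<forall>x\<in>topspace X. finite {k. x \<notin> Z k})"

lemma gammaF_sequenceD:
  assumes "gammaF_sequence X U Z"
  shows "cozero_set X (U k)" "zero_set X (Z k)" "Z k \<subseteq> U k" "U k \<subseteq> topspace X"
    "U k \<noteq> topspace X" "x \<in> topspace X \<Longrightarrow> finite {k. x \<notin> Z k}"
  using assms openin_subset[OF openin_cozero_set] unfolding gammaF_sequence_def by auto

lemma range_in_GammaF_coversI: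
  assumes "gammaF_sequence X U Z"
  shows "range U \<in> GammaF_covers X"
proof -
  note U = gammaF_sequenceD(1-5)[OF assms] and Z_fin = gammaF_sequenceD(6)[OF assms]
  have Z: "Z k \<subseteq> topspace X" "Z k \<noteq> topspace X" for k
    using U(3,4,5)[of k] by auto
  have "finite {k \<in> UNIV. x \<notin> U k}" if "x \<in> topspace X" for x
    using Z_fin[OF that] by (rule finite_subset[rotated]) (use U(3) in blast)
  then have gamma: "is_gamma_cover X (range U)"
    using U(4,5) by (intro is_gamma_cover_imageI) auto
  define M where "M = inv U ` range U"
  have "inj_on (inv U) (range U)"
    by (simp add: inj_on_inv_into)
  with gamma have "infinite M"
    unfolding M_def is_gamma_cover_def using finite_imageD by blast
  moreover have "finite {k \<in> M. x \<notin> Z k}" if "x \<in> topspace X" for x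
    using Z_fin[OF that] by (rule finite_subset[rotated]) blast
  ultimately have "is_gamma_cover X (Z ` M)"
    using Z by (intro is_gamma_cover_imageI)
  moreover have "Z ` M = (Z \<circ> inv U) ` range U"
    unfolding M_def by (simp add: image_comp)
  moreover have "zero_set X ((Z \<circ> inv U) V) \<and> (Z \<circ> inv U) V \<subseteq> V" if "V \<in> range U" for V
    using U(2,3) f_inv_into_f[OF that] by (metis comp_apply)
  ultimately have "\<exists>F. (\<forall>V\<in>range U. zero_set X (F V) \<and> F V \<subseteq> V) \<and> is_gamma_cover X (F ` range U)"
    by metis
  then show ?thesis
    unfolding GammaF_covers_def using gamma U(1) by blast
qed

section \<open>Selections in \<open>C\<^sub>p(X)\<close> from selections of covers\<close>

lemma Gamma_at_Cp_enumeration_near_sets: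
  fixes a :: "nat \<Rightarrow> 'a \<Rightarrow> real"
  assumes "A \<in> Gamma_at (Cp X) f" "f \<in> topspace (Cp X)" "\<delta> > 0" "inj a" "range a \<subseteq> A"
  shows "cozero_set X {x \<in> topspace X. \<bar>a k x - f x\<bar> < \<delta>}"
    and "zero_set X {x \<in> topspace X. \<bar>a k x - f x\<bar> \<le> \<delta> / 2}"
    and "x \<in> topspace X \<Longrightarrow> finite {k. x \<notin> {x \<in> topspace X. \<bar>a k x - f x\<bar> \<le> \<delta> / 2}}"
proof -
  have "a k \<in> topspace (Cp X)" for k
    using assms(1,5) unfolding Gamma_at_def by blast
  then have cont: "continuous_map X euclideanreal (\<lambda>x. \<bar>a k x - f x\<bar>)" for k
    using assms(2) by (rule continuous_map_abs_diff_Cp)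
  show "cozero_set X {x \<in> topspace X. \<bar>a k x - f x\<bar> < \<delta>}"
    by (rule cozero_set_less[OF cont])
  show "zero_set X {x \<in> topspace X. \<bar>a k x - f x\<bar> \<le> \<delta> / 2}"
    by (rule zero_set_le[OF cont])
  assume x: "x \<in> topspace X"
  have "\<delta> / 2 > 0"
    using assms(3) by simp
  from finite_vimageI[OF Gamma_at_Cp_finite_far[OF assms(1,2) x this] assms(4)]
  have "finite (a -` {b \<in> A. \<delta> / 2 \<le> \<bar>b x - f x\<bar>})" .
  then show "finite {k. x \<notin> {x \<in> topspace X. \<bar>a k x - f x\<bar> \<le> \<delta> / 2}}"
    by (rule finite_subset[rotated]) (use x assms(5) in auto)
qed

lemma gammaF_sequence_if_not_uniformly_close:
  assumes "A \<in> Gamma_at (Cp X) f" "f \<in> topspace (Cp X)" "e > 0"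
    and "infinite {a \<in> A. \<exists>x\<in>topspace X. e \<le> \<bar>a x - f x\<bar>}"
  obtains U Z where "gammaF_sequence X U Z"
proof -
  obtain c :: "nat \<Rightarrow> 'a \<Rightarrow> real"
    where c: "inj c" "range c \<subseteq> {a \<in> A. \<exists>x\<in>topspace X. e \<le> \<bar>a x - f x\<bar>}"
    using infinite_countable_subset[OF assms(4)] by blast
  then have "range c \<subseteq> A"
    by blast
  note near = Gamma_at_Cp_enumeration_near_sets[OF assms(1-3) c(1) this]
  define U where "U k = {x \<in> topspace X. \<bar>c k x - f x\<bar> < e}" for k
  define Z where "Z k = {x \<in> topspace X. \<bar>c k x - f x\<bar> \<le> e / 2}" for k
  have "gammaF_sequence X U Z"
    unfolding gammaF_sequence_def U_def Z_def
  proof (intro conjI allI ballI near)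
    fix k
    show "{x \<in> topspace X. \<bar>c k x - f x\<bar> \<le> e / 2} \<subseteq> {x \<in> topspace X. \<bar>c k x - f x\<bar> < e}"
      using assms(3) by auto
    obtain x where x: "x \<in> topspace X" "e \<le> \<bar>c k x - f x\<bar>"
      using c(2) by blast
    then have "x \<notin> {x \<in> topspace X. \<bar>c k x - f x\<bar> < e}"
      by auto
    with x(1) show "{x \<in> topspace X. \<bar>c k x - f x\<bar> < e} \<noteq> topspace X"
      by blast
  qed
  then show thesis
    by (rule that)
qed

lemma range_Int_near_in_GammaF_covers:
  fixes a :: "nat \<Rightarrow> 'a \<Rightarrow> real"
  assumes "gammaF_sequence X W Z" "A \<in> Gamma_at (Cp X) f" "f \<in> topspace (Cp X)" "\<delta> > 0"
    and "inj a" "range a \<subseteq> A"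
  shows "range (\<lambda>k. W k \<inter> {x \<in> topspace X. \<bar>a k x - f x\<bar> < \<delta>}) \<in> GammaF_covers X"
proof -
  note W = gammaF_sequenceD[OF assms(1)]
    and near = Gamma_at_Cp_enumeration_near_sets[OF assms(2-6)]
  define U where "U k = W k \<inter> {x \<in> topspace X. \<bar>a k x - f x\<bar> < \<delta>}" for k
  define F where "F k = Z k \<inter> {x \<in> topspace X. \<bar>a k x - f x\<bar> \<le> \<delta> / 2}" for k
  have "gammaF_sequence X U F"
    unfolding gammaF_sequence_def
  proof (intro conjI allI ballI)
    fix k
    show "cozero_set X (U k)"
      unfolding U_def by (rule cozero_set_Int[OF W(1) near(1)])
    show "zero_set X (F k)"
      unfolding F_def by (rule zero_set_Int[OF W(2) near(2)])
    show "F k \<subseteq> U k"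
      unfolding U_def F_def using W(3)[of k] assms(4) by auto
    have "U k \<subseteq> W k"
      unfolding U_def by blast
    with W(4,5)[of k] show "U k \<noteq> topspace X"
      by auto
  next
    fix x assume x: "x \<in> topspace X"
    have "{k. x \<notin> F k} \<subseteq> {k. x \<notin> Z k} \<union> {k. x \<notin> {x \<in> topspace X. \<bar>a k x - f x\<bar> \<le> \<delta> / 2}}"
      unfolding F_def by blast
    with W(6)[OF x] near(3)[OF x] show "finite {k. x \<notin> F k}"
      by (meson finite_Un finite_subset)
  qed
  then show ?thesis
    unfolding U_def by (rule range_in_GammaF_coversI)
qed

lemma omega_covers_range_cofinal:
  fixes V :: "nat \<Rightarrow> 'a set"
  assumes "range V \<in> omega_covers X" "finite K" "K \<subseteq> topspace X"
  obtains n where "N \<le> n" "K \<subseteq> V n"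
proof -
  have V: "\<Union> (range V) = topspace X" "topspace X \<notin> range V"
    and omega: "\<And>F. finite F \<Longrightarrow> F \<subseteq> topspace X \<Longrightarrow> \<exists>W\<in>range V. F \<subseteq> W"
    using assms(1) unfolding omega_covers_def is_cover_def by simp_all
  have "V j \<subseteq> topspace X" "V j \<noteq> topspace X" for j
    using V by auto
  then have "\<exists>y. y \<in> topspace X \<and> y \<notin> V j" for j
    by blast
  then obtain y where y: "\<And>j. y j \<in> topspace X" "\<And>j. y j \<notin> V j"
    by metis
  \<comment> \<open>Enlarging \<open>K\<close> by the points \<open>y j \<notin> V j\<close>, \<open>j < N\<close>, rules out the indices below \<open>N\<close>.\<close>
  have "finite (K \<union> y ` {..<N})" "K \<union> y ` {..<N} \<subseteq> topspace X"
    using assms(2,3) y(1) by auto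
  then obtain n where n: "K \<union> y ` {..<N} \<subseteq> V n"
    using omega by blast
  have "N \<le> n"
  proof (rule ccontr)
    assume "\<not> N \<le> n"
    with n have "y n \<in> V n"
      by auto
    with y(2) show False ..
  qed
  with n show thesis
    by (intro that) auto
qed

lemma Omega_at_Cp_selection_if_uniformly_close:
  fixes A :: "nat \<Rightarrow> ('a \<Rightarrow> real) set"
  assumes "f \<in> topspace (Cp X)" "\<And>n. A n \<in> Gamma_at (Cp X) f"
    and "\<And>n. finite {a \<in> A n. \<exists>x\<in>topspace X. inverse (Suc n) \<le> \<bar>a x - f x\<bar>}"
  shows "\<exists>b. (\<forall>n. b n \<in> A n) \<and> range b \<in> Omega_at (Cp X) f"
proof -
  have "\<exists>a \<in> A n. \<forall>x\<in>topspace X. \<bar>a x - f x\<bar> < inverse (Suc n)" for n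
  proof -
    have "infinite (A n - {a \<in> A n. \<exists>x\<in>topspace X. inverse (Suc n) \<le> \<bar>a x - f x\<bar>})"
      using assms(2)[of n] assms(3)[of n] unfolding Gamma_at_def by (simp add: Diff_infinite_finite)
    then obtain a where "a \<in> A n - {a \<in> A n. \<exists>x\<in>topspace X. inverse (Suc n) \<le> \<bar>a x - f x\<bar>}"
      using infinite_imp_nonempty by blast
    then show ?thesis
      by (auto simp: not_le)
  qed
  then obtain b where b: "\<And>n. b n \<in> A n" "\<And>n x. x \<in> topspace X \<Longrightarrow> \<bar>b n x - f x\<bar> < inverse (Suc n)"
    by metis
  have "\<exists>n. \<forall>x\<in>K. \<bar>b n x - f x\<bar> < d" if "K \<subseteq> topspace X" "d > 0" for K and d :: real
  proof -
    obtain n where n: "inverse (Suc n) < d"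
      using \<open>d > 0\<close> reals_Archimedean by blast
    have "\<forall>x\<in>K. \<bar>b n x - f x\<bar> < d"
      using b(2) that(1) n by (meson less_trans subsetD)
    then show ?thesis ..
  qed
  then have "range b \<in> Omega_at (Cp X) f"
    by (intro range_in_Omega_at_CpI[OF assms(1,2) b(1)]) blast
  with b(1) show ?thesis
    by blast
qed

lemma Omega_at_Cp_selection_if_gammaF_sequence:
  fixes A :: "nat \<Rightarrow> ('a \<Rightarrow> real) set"
  assumes "S1 (GammaF_covers X) (omega_covers X)" "f \<in> topspace (Cp X)"
    and "\<And>n. A n \<in> Gamma_at (Cp X) f" "gammaF_sequence X W Z"
  shows "\<exists>b. (\<forall>n. b n \<in> A n) \<and> range b \<in> Omega_at (Cp X) f"
proof -
  have "\<exists>a :: nat \<Rightarrow> 'a \<Rightarrow> real. inj a \<and> range a \<subseteq> A n" for n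
    using assms(3)[of n] infinite_countable_subset unfolding Gamma_at_def by blast
  then obtain a :: "nat \<Rightarrow> nat \<Rightarrow> 'a \<Rightarrow> real" where a: "\<And>n. inj (a n)" "\<And>n. range (a n) \<subseteq> A n"
    by metis
  define U where "U n k = W k \<inter> {x \<in> topspace X. \<bar>a n k x - f x\<bar> < inverse (Suc n)}" for n k
  have "range (U n) \<in> GammaF_covers X" for n
    unfolding U_def by (rule range_Int_near_in_GammaF_covers[OF assms(4,3,2) _ a]) simp
  then obtain V :: "nat \<Rightarrow> 'a set" where V: "\<And>n. V n \<in> range (U n)" and omega: "range V \<in> omega_covers X"
    using assms(1)[unfolded S1_def, rule_format, of "\<lambda>n. range (U n)"] by auto
  have "\<exists>k. V n = U n k" for n
    using V[of n] by blast
  then obtain k where k: "\<And>n. V n = U n (k n)"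
    by metis
  define b where "b n = a n (k n)" for n
  have b: "b n \<in> A n" for n
    unfolding b_def using a(2) by blast
  have "\<exists>n. \<forall>x\<in>K. \<bar>b n x - f x\<bar> < d" if K: "finite K" "K \<subseteq> topspace X" and "d > 0" for K and d :: real
  proof -
    obtain N where N: "inverse (Suc N) < d"
      using \<open>d > 0\<close> reals_Archimedean by blast
    obtain n where n: "N \<le> n" "K \<subseteq> V n"
      using omega_covers_range_cofinal[OF omega K] by blast
    have "\<bar>b n x - f x\<bar> < d" if "x \<in> K" for x
    proof -
      have "\<bar>b n x - f x\<bar> < inverse (Suc n)"
        using k[of n] n(2) that unfolding b_def U_def by blast
      also have "\<dots> \<le> inverse (Suc N)"
        using n(1) by (simp add: le_imp_inverse_le)
      finally show ?thesis
        using N by linarith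
    qed
    then show ?thesis
      by blast
  qed
  then have "range b \<in> Omega_at (Cp X) f"
    by (intro range_in_Omega_at_CpI[OF assms(2,3) b]) blast
  with b show ?thesis
    by blast
qed

lemma S1_Gamma_Omega_Cp_if_S1_GammaF_omega:
  assumes "S1 (GammaF_covers X) (omega_covers X)" "f \<in> topspace (Cp X)"
  shows "S1 (Gamma_at (Cp X) f) (Omega_at (Cp X) f)"
  unfolding S1_def
proof (intro allI impI)
  fix A :: "nat \<Rightarrow> ('a \<Rightarrow> real) set"
  assume A: "\<forall>n. A n \<in> Gamma_at (Cp X) f"
  show "\<exists>b. (\<forall>n. b n \<in> A n) \<and> range b \<in> Omega_at (Cp X) f"
  proof (cases "\<forall>n. finite {a \<in> A n. \<exists>x\<in>topspace X. inverse (Suc n) \<le> \<bar>a x - f x\<bar>}")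
    case True
    with assms(2) A show ?thesis
      by (intro Omega_at_Cp_selection_if_uniformly_close) auto
  next
    case False
    then obtain m where m: "infinite {a \<in> A m. \<exists>x\<in>topspace X. inverse (Suc m) \<le> \<bar>a x - f x\<bar>}"
      by blast
    have "inverse (Suc m) > (0 :: real)"
      by simp
    then obtain W Z where "gammaF_sequence X W Z"
      by (rule gammaF_sequence_if_not_uniformly_close[OF A[rule_format] assms(2) _ m])
    with assms A show ?thesis
      by (intro Omega_at_Cp_selection_if_gammaF_sequence) auto
  qed
qed

section \<open>Selections of covers from selections in \<open>C\<^sub>p(X)\<close>\<close>

lemma GammaF_covers_memberD:
  assumes "\<U> \<in> GammaF_covers X" "U \<in> \<U>"
  shows "cozero_set X U" "U \<subseteq> topspace X" "U \<noteq> topspace X"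
  using assms unfolding GammaF_covers_def is_gamma_cover_def is_cover_def by auto

text \<open>The shrinking \<open>F\<close> need not be injective, so the \<open>\<gamma>\<close>-cover \<open>F ` \<U>\<close> serves as index
  set, each of its members \<open>V\<close> pointing back to some \<open>G V \<in> \<U>\<close> that it shrinks.\<close>
lemma GammaF_covers_obtain_shrinking:
  assumes "\<U> \<in> GammaF_covers X"
  obtains \<V> G where "is_gamma_cover X \<V>" "\<And>V. V \<in> \<V> \<Longrightarrow> zero_set X V \<and> V \<subseteq> G V \<and> G V \<in> \<U>"
proof -
  obtain F where F: "\<And>U. U \<in> \<U> \<Longrightarrow> zero_set X (F U) \<and> F U \<subseteq> U" "is_gamma_cover X (F ` \<U>)"
    using assms unfolding GammaF_covers_def by blast
  have "zero_set X V \<and> V \<subseteq> inv_into \<U> F V \<and> inv_into \<U> F V \<in> \<U>" if "V \<in> F ` \<U>" for V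
    using F(1)[OF inv_into_into[OF that]] f_inv_into_f[OF that] inv_into_into[OF that] by simp
  with F(2) show thesis
    by (rule that)
qed

lemma Gamma_at_Cp_zero_if_GammaF_cover:
  assumes "\<U> \<in> GammaF_covers X"
  obtains A where "A \<in> Gamma_at (Cp X) (restrict (\<lambda>_. 0) (topspace X))"
    "\<And>a. a \<in> A \<Longrightarrow> \<exists>U\<in>\<U>. \<forall>x\<in>topspace X - U. a x = 1"
proof -
  let ?zero = "restrict (\<lambda>_. 0) (topspace X) :: 'a \<Rightarrow> real"
  obtain \<V> G where \<V>: "is_gamma_cover X \<V>" and G: "\<And>V. V \<in> \<V> \<Longrightarrow> zero_set X V \<and> V \<subseteq> G V \<and> G V \<in> \<U>"
    using GammaF_covers_obtain_shrinking[OF assms] by blast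
  note GU = GammaF_covers_memberD[OF assms]
  have "\<exists>h. h \<in> topspace (Cp X) \<and> (\<forall>x\<in>V. h x = 0) \<and> (\<forall>x\<in>topspace X - G V. h x = 1)" if "V \<in> \<V>" for V
    using zero_set_cozero_set_separation[of X V "G V"] G[OF that] GU(1) by metis
  then obtain H where H: "\<And>V. V \<in> \<V> \<Longrightarrow> H V \<in> topspace (Cp X)"
    "\<And>V x. V \<in> \<V> \<Longrightarrow> x \<in> V \<Longrightarrow> H V x = 0"
    "\<And>V x. V \<in> \<V> \<Longrightarrow> x \<in> topspace X - G V \<Longrightarrow> H V x = 1"
    by metis
  have nonzero: "\<exists>x\<in>topspace X. H V x \<noteq> ?zero x" if V: "V \<in> \<V>" for V
  proof -
    obtain x where x: "x \<in> topspace X - G V"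
      using GU(2,3) G[OF V] by blast
    with H(3)[OF V x] show ?thesis
      by (intro bexI[of _ x]) auto
  qed
  have pointwise: "finite {V \<in> \<V>. H V x \<noteq> ?zero x}" if "x \<in> topspace X" for x
  proof -
    have "finite {V \<in> \<V>. x \<notin> V}"
      using \<V> that unfolding is_gamma_cover_def by blast
    then show ?thesis
      by (rule finite_subset[rotated]) (use H(2) that in auto)
  qed
  have "H ` \<V> \<in> Gamma_at (Cp X) ?zero"
  proof (rule Gamma_at_CpI)
    show "H ` \<V> \<subseteq> topspace (Cp X)"
      using H(1) by blast
    show "infinite (H ` \<V>)"
      using \<V> nonzero pointwise unfolding is_gamma_cover_def
      by (intro infinite_image_if_pointwise_finite[where R = "\<lambda>h x. h x = ?zero x"]) auto
    show "?zero \<notin> H ` \<V>"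
      using nonzero by fastforce
    show "finite {a \<in> H ` \<V>. a x \<noteq> ?zero x}" if "x \<in> topspace X" for x
    proof -
      have "{a \<in> H ` \<V>. a x \<noteq> ?zero x} = H ` {V \<in> \<V>. H V x \<noteq> ?zero x}"
        by auto
      then show ?thesis
        using pointwise[OF that] by simp
    qed
  qed
  moreover have "\<exists>U\<in>\<U>. \<forall>x\<in>topspace X - U. a x = 1" if "a \<in> H ` \<V>" for a
    using that G H(3) by blast
  ultimately show thesis
    by (rule that)
qed

lemma range_in_omega_coversI_Cp:
  fixes W :: "nat \<Rightarrow> 'a set"
  assumes "\<And>n. openin X (W n)" "\<And>n. W n \<noteq> topspace X"
    and "\<And>n x. x \<in> topspace X - W n \<Longrightarrow> b n x = 1"
    and "range b \<in> Omega_at (Cp X) (restrict (\<lambda>_. 0) (topspace X))"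
  shows "range W \<in> omega_covers X"
proof -
  let ?zero = "restrict (\<lambda>_. 0) (topspace X) :: 'a \<Rightarrow> real"
  have sub: "range b \<subseteq> topspace (Cp X)" and "?zero \<in> Cp X closure_of range b"
    using assms(4) unfolding Omega_at_def by auto
  then have approx: "\<exists>s\<in>range b. \<forall>x\<in>K. \<bar>s x - ?zero x\<bar> < 1" if "finite K" "K \<subseteq> topspace X" for K
    using that unfolding in_closure_of_Cp[OF sub] by (meson zero_less_one)
  have cofinal: "\<exists>n. K \<subseteq> W n" if K: "finite K" "K \<subseteq> topspace X" for K
  proof -
    obtain n where n: "\<forall>x\<in>K. \<bar>b n x - ?zero x\<bar> < 1"
      using approx[OF K] by blast
    have "K \<subseteq> W n"
    proof
      fix x assume "x \<in> K"
      with n K(2) have "\<bar>b n x\<bar> < 1"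
        by force
      with assms(3)[of x n] \<open>x \<in> K\<close> K(2) show "x \<in> W n"
        by force
    qed
    then show ?thesis ..
  qed
  show ?thesis
    unfolding omega_covers_def is_cover_def
  proof (intro CollectI conjI ballI allI impI)
    show "\<Union> (range W) = topspace X"
    proof
      show "\<Union> (range W) \<subseteq> topspace X"
        using assms(1) openin_subset by blast
      show "topspace X \<subseteq> \<Union> (range W)"
      proof
        fix x assume "x \<in> topspace X"
        then obtain n where "{x} \<subseteq> W n"
          using cofinal[of "{x}"] by auto
        then show "x \<in> \<Union> (range W)"
          by blast
      qed
    qed
    show "topspace X \<notin> range W"
      using assms(2) by (metis rangeE)
    show "openin X U" if "U \<in> range W" for U
      using that assms(1) by blast
    show "\<exists>U\<in>range W. F \<subseteq> U" if F: "finite F \<and> F \<subseteq> topspace X" for F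
    proof -
      obtain n where "F \<subseteq> W n"
        using cofinal[of F] F by blast
      then show ?thesis
        by blast
    qed
  qed
qed

lemma S1_GammaF_omega_if_S1_Gamma_Omega_Cp_zero:
  assumes "S1 (Gamma_at (Cp X) (restrict (\<lambda>_. 0) (topspace X)))
              (Omega_at (Cp X) (restrict (\<lambda>_. 0) (topspace X)))"
  shows "S1 (GammaF_covers X) (omega_covers X)"
  unfolding S1_def
proof (intro allI impI)
  let ?zero = "restrict (\<lambda>_. 0) (topspace X) :: 'a \<Rightarrow> real"
  fix \<U> :: "nat \<Rightarrow> 'a set set"
  assume \<U>: "\<forall>n. \<U> n \<in> GammaF_covers X"
  have "\<exists>A. A \<in> Gamma_at (Cp X) ?zero \<and> (\<forall>a\<in>A. \<exists>U\<in>\<U> n. \<forall>x\<in>topspace X - U. a x = 1)" for n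
    by (rule Gamma_at_Cp_zero_if_GammaF_cover[OF \<U>[rule_format, of n]]) blast
  then obtain A where A: "\<And>n. A n \<in> Gamma_at (Cp X) ?zero"
    "\<And>n a. a \<in> A n \<Longrightarrow> \<exists>U\<in>\<U> n. \<forall>x\<in>topspace X - U. a x = 1"
    by metis
  obtain b where b: "\<And>n. b n \<in> A n" "range b \<in> Omega_at (Cp X) ?zero"
    using assms[unfolded S1_def, rule_format, of A] A(1) by auto
  have "\<exists>U\<in>\<U> n. \<forall>x\<in>topspace X - U. b n x = 1" for n
    using A(2)[OF b(1)] .
  then obtain W where W: "\<And>n. W n \<in> \<U> n" "\<And>n x. x \<in> topspace X - W n \<Longrightarrow> b n x = 1"
    by metis
  have "openin X (W n)" "W n \<noteq> topspace X" for n
    using GammaF_covers_memberD[OF \<U>[rule_format] W(1)] openin_cozero_set by blast+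
  then have "range W \<in> omega_covers X"
    using W(2) b(2) by (rule range_in_omega_coversI_Cp)
  with W(1) show "\<exists>W. (\<forall>n. W n \<in> \<U> n) \<and> range W \<in> omega_covers X"
    by blast
qed

theorem mainTheorem5:
  fixes X :: "'a topology"
  assumes "tychonoff_space X"
  shows "(\<forall>f\<in>topspace (Cp X). S1 (Gamma_at (Cp X) f) (Omega_at (Cp X) f))
         \<longleftrightarrow> S1 (GammaF_covers X) (omega_covers X)"
proof -
  have "restrict (\<lambda>_. 0) (topspace X) \<in> topspace (Cp X)"
    by (rule restrict_in_topspace_Cp) simp
  then show ?thesis
    using S1_GammaF_omega_if_S1_Gamma_Omega_Cp_zero S1_Gamma_Omega_Cp_if_S1_GammaF_omega by blast
qed

end
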